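(* Assume the standing hypotheses (S) with $\lambda\ge0$, that $\nabla\phi^{\#}_{\rho_0}$ is $L$-Lipschitz on $\mathbb H$, and $\tau\le1/L$. Then for every $n\ge0$: (1) the energy is non-increasing: \[\phi^{\#}_{\rho_0}(X_{n+1}^\tau)+\frac\lambda2\|X_n^\tau-X_{n+1}^\tau\|^2_{\mathbb H}+\tau\Big(1-\frac{L\tau}2\Big)\|\nabla\phi^{\#}_{\rho_0}(X_{n+1}^\tau)\|^2_{\mathbb H}\le\phi^{\#}_{\rho_0}(X_n^\tau);\] (2) the gradient norm decays exponentially: \[\|\nabla\phi^{\#}_{\rho_0}(X_n^\tau)\|^2_{\mathbb H}\ge e^{2\lambda_{\tau,L}\tau}\|\nabla\phi^{\#}_{\rho_0}(X_{n+1}^\tau)\|^2_{\mathbb H},\qquad\lambda_{\tau,L}:=\frac{\log\big(1+\lambda\tau(2-L\tau)\big)}{2\tau}\ge0.\]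
   Context: Standing hypotheses (S): $\rho_0\in\mathcal P_2(\mathbb R^d)$; $\mathbb H=L^2(\mathbb R^d;\rho_0)$ is the Hilbert space of $\rho_0$-square-integrable maps $\mathbb R^d\to\mathbb R^d$ with $\langle\xi_1,\xi_2\rangle_{\mathbb H}=\int\langle\xi_1,\xi_2\rangle d\rho_0$; $\phi:\mathcal P_2(\mathbb R^d)\to\mathbb R$ has lift $\phi^{\#}_{\rho_0}(\xi):=\phi(\xi_{\#}\rho_0)$ which is Fréchet differentiable on $\mathbb H$ (gradient $\nabla\phi^{\#}_{\rho_0}$), $\lambda$-convex on $\mathbb H$ for some $\lambda\in\mathbb R$ (i.e. $\phi^{\#}_{\rho_0}((1-t)\xi_1+t\xi_2)\le(1-t)\phi^{\#}_{\rho_0}(\xi_1)+t\phi^{\#}_{\rho_0}(\xi_2)-\frac\lambda2t(1-t)\|\xi_1-\xi_2\|_{\mathbb H}^2$), and $\inf_{\mathbb H}\phi^{\#}_{\rho_0}>-\infty$; the time step $\tau>0$ satisfies $\lambda/2+1/\tau>0$; $X_0^\tau\in\mathbb H$. Lagrangian trapezoidal scheme: $X_{n+1}^\tau$ is the (unique) minimizer over $\xi\in\mathbb H$ of $\tfrac12\phi^{\#}_{\rho_0}(\xi)+\tfrac12\langle\nabla\phi^{\#}_{\rho_0}(X_n^\tau),\xi\rangle_{\mathbb H}+\tfrac1{2\tau}\|\xi-X_n^\tau\|^2_{\mathbb H}$; equivalently $X_{n+1}^\tau=X_n^\tau-\frac\tau2\big(\nabla\phi^{\#}_{\rho_0}(X_{n+1}^\tau)+\nabla\phi^{\#}_{\rho_0}(X_n^\tau)\big)$.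 *)

theory Defs
  imports "HOL-Analysis.Analysis"
begin

text \<open>The Hilbert space H = L^2(R^d; rho0) is modelled by an abstract real Hilbert space
  type 'h; F plays the role of the lift phi#_rho0 and G the role of its gradient.\<close>

definition lambda_convex_on_space :: "real \<Rightarrow> ('h::real_inner \<Rightarrow> real) \<Rightarrow> bool" where
  "lambda_convex_on_space lam F \<longleftrightarrow>
     (\<forall>x y t. 0 \<le> t \<and> t \<le> 1 \<longrightarrow>
        F ((1 - t) *\<^sub>R x + t *\<^sub>R y)
          \<le> (1 - t) * F x + t * F y - lam / 2 * t * (1 - t) * (norm (x - y))\<^sup>2)"

definition trapezoid_objective ::
    "('h::real_inner \<Rightarrow> real) \<Rightarrow> ('h \<Rightarrow> 'h) \<Rightarrow> real \<Rightarrow> 'h \<Rightarrow> 'h \<Rightarrow> real" where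
  "trapezoid_objective F G tau Xn xi =
     1/2 * F xi + 1/2 * (G Xn \<bullet> xi) + 1 / (2 * tau) * (norm (xi - Xn))\<^sup>2"

definition lambda_tauL :: "real \<Rightarrow> real \<Rightarrow> real \<Rightarrow> real" where
  "lambda_tauL lam tau L = ln (1 + lam * tau * (2 - L * tau)) / (2 * tau)"

end

theory Submission
  imports Defs
begin

text \<open>Write a = X n, b = X (n + 1). The minimality of b gives the Euler-Lagrange equation
  a - b = tau/2 (G a + G b). Summing the first-order lambda-convexity inequality at a and at b
  makes G strongly monotone, which with this equation yields
  |G a|^2 - |G b|^2 \<ge> lam tau/2 |G a + G b|^2; in particular |G b| \<le> |G a|. The Lipschitz
  bound turns into |G a - G b| \<le> (L tau/2) |G a + G b|, and these two facts force
  G a \<bullet> G b \<ge> (1 - L tau/2) |G b|^2. The energy estimate is then the convexity inequality at b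
  in the direction a - b, and the gradient decay follows from
  |G a + G b|^2 \<ge> 4 (1 - L tau/2) |G b|^2.\<close>

lemma inner_ge_of_norm_diff_le:
  fixes g h :: "'a::real_inner"
  assumes norm_le: "norm h \<le> norm g"
    and diff_le: "norm (g - h) \<le> c * norm (g + h)"
    and "0 \<le> c" "c \<le> 1"
  shows "(1 - c) * (norm h)\<^sup>2 \<le> g \<bullet> h"
proof -
  define A B P where "A = (norm g)\<^sup>2" and "B = (norm h)\<^sup>2" and "P = g \<bullet> h"
  have "B \<le> A"
    unfolding A_def B_def using norm_le by (simp add: power_mono)
  have "(norm (g - h))\<^sup>2 \<le> (c * norm (g + h))\<^sup>2"
    using diff_le by (simp add: power_mono)
  then have "A - 2 * P + B \<le> c\<^sup>2 * (A + 2 * P + B)"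
    unfolding A_def B_def P_def power2_norm_eq_inner power_mult_distrib
    by (simp add: inner_diff_left inner_diff_right inner_add_left inner_add_right inner_commute add_ac)
  moreover have "(1 - c\<^sup>2) * (2 * B) \<le> (1 - c\<^sup>2) * (A + B)"
    using \<open>B \<le> A\<close> \<open>0 \<le> c\<close> \<open>c \<le> 1\<close> by (intro mult_left_mono) (auto simp: power_le_one)
  ultimately have "(1 - c\<^sup>2) * B \<le> (1 + c\<^sup>2) * P"
    by (simp add: algebra_simps)
  moreover have "(1 - c) * (1 + c\<^sup>2) * B \<le> (1 - c\<^sup>2) * B"
  proof (rule mult_right_mono)
    have "(1 - c\<^sup>2) - (1 - c) * (1 + c\<^sup>2) = c * (1 - c)\<^sup>2"
      by (simp add: algebra_simps power2_eq_square)
    then show "(1 - c) * (1 + c\<^sup>2) \<le> 1 - c\<^sup>2"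
      using \<open>0 \<le> c\<close> by (metis diff_ge_0_iff_ge zero_le_mult_iff zero_le_power2)
  qed (simp add: B_def)
  ultimately have "(1 + c\<^sup>2) * ((1 - c) * B) \<le> (1 + c\<^sup>2) * P"
    by (simp add: algebra_simps)
  then show ?thesis
    unfolding B_def P_def by (simp add: add_pos_nonneg)
qed

lemma lambda_convex_gradient_inequality:
  fixes F :: "'h::real_inner \<Rightarrow> real" and G :: "'h \<Rightarrow> 'h"
  assumes grad: "\<And>x. (F has_derivative (\<lambda>h. G x \<bullet> h)) (at x)"
    and convex: "lambda_convex_on_space lam F"
  shows "F x + G x \<bullet> (y - x) + lam / 2 * (norm (y - x))\<^sup>2 \<le> F y"
proof -
  define \<phi> where "\<phi> = (\<lambda>t::real. F (x + t *\<^sub>R (y - x)))"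
  have "((\<lambda>t::real. x + t *\<^sub>R (y - x)) has_derivative (\<lambda>t. t *\<^sub>R (y - x))) (at 0)"
    by (auto intro!: derivative_eq_intros)
  from diff_chain_at[OF this grad]
  have "(\<phi> has_real_derivative G x \<bullet> (y - x)) (at 0)"
    by (simp add: has_field_derivative_def \<phi>_def o_def mult_commute_abs)
  then have "(\<phi> has_real_derivative G x \<bullet> (y - x)) (at 0 within {0<..})"
    by (rule has_field_derivative_at_within)
  then have slope_lim: "((\<lambda>t. (\<phi> t - \<phi> 0) / t) \<longlongrightarrow> G x \<bullet> (y - x)) (at_right 0)"
    by (simp add: has_field_derivative_iff)
  have bound_lim: "((\<lambda>t. F y - F x - lam / 2 * (1 - t) * (norm (y - x))\<^sup>2)
      \<longlongrightarrow> F y - F x - lam / 2 * (1 - 0) * (norm (y - x))\<^sup>2) (at_right 0)"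
    by (intro tendsto_intros)
  have "\<forall>\<^sub>F t in at_right 0. 0 < t \<and> t < (1::real)"
    unfolding eventually_at_right_field by (auto intro!: exI[of _ 1])
  then have "\<forall>\<^sub>F t in at_right 0.
      (\<phi> t - \<phi> 0) / t \<le> F y - F x - lam / 2 * (1 - t) * (norm (y - x))\<^sup>2"
  proof eventually_elim
    case (elim t)
    have "(1 - t) *\<^sub>R x + t *\<^sub>R y = x + t *\<^sub>R (y - x)"
      by (simp add: algebra_simps)
    moreover have "F ((1 - t) *\<^sub>R x + t *\<^sub>R y)
        \<le> (1 - t) * F x + t * F y - lam / 2 * t * (1 - t) * (norm (x - y))\<^sup>2"
      using convex elim unfolding lambda_convex_on_space_def by auto
    ultimately have "\<phi> t - \<phi> 0 \<le> t * (F y - F x - lam / 2 * (1 - t) * (norm (y - x))\<^sup>2)"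
      unfolding \<phi>_def by (simp add: norm_minus_commute algebra_simps)
    then show ?case
      using elim by (simp add: divide_simps mult.commute)
  qed
  from tendsto_le[OF _ bound_lim slope_lim this]
  show ?thesis by simp
qed

lemma lambda_convex_gradient_strongly_monotone:
  fixes F :: "'h::real_inner \<Rightarrow> real" and G :: "'h \<Rightarrow> 'h"
  assumes grad: "\<And>x. (F has_derivative (\<lambda>h. G x \<bullet> h)) (at x)"
    and convex: "lambda_convex_on_space lam F"
  shows "lam * (norm (x - y))\<^sup>2 \<le> (G x - G y) \<bullet> (x - y)"
  using lambda_convex_gradient_inequality[OF grad convex, of x y]
    lambda_convex_gradient_inequality[OF grad convex, of y x]
  by (simp add: norm_minus_commute inner_diff_left inner_diff_right)

lemma trapezoid_minimizer_euler_lagrange: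
  fixes F :: "'h::real_inner \<Rightarrow> real" and G :: "'h \<Rightarrow> 'h"
  assumes grad: "\<And>x. (F has_derivative (\<lambda>h. G x \<bullet> h)) (at x)"
    and tau: "0 < tau"
    and minimal: "\<And>xi. trapezoid_objective F G tau a b \<le> trapezoid_objective F G tau a xi"
  shows "a - b = (tau / 2) *\<^sub>R (G a + G b)"
proof -
  define w where "w = (1 / 2) *\<^sub>R (G a + G b) + (1 / tau) *\<^sub>R (b - a)"
  have objective_eq: "trapezoid_objective F G tau a =
      (\<lambda>xi. 1/2 * F xi + 1/2 * (G a \<bullet> xi) + 1 / (2 * tau) * ((xi - a) \<bullet> (xi - a)))"
    by (simp add: fun_eq_iff trapezoid_objective_def power2_norm_eq_inner)
  have "(trapezoid_objective F G tau a has_derivative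
      (\<lambda>v. 1/2 * (G b \<bullet> v) + 1/2 * (G a \<bullet> v) + 1 / (2 * tau) * (v \<bullet> (b - a) + (b - a) \<bullet> v))) (at b)"
    unfolding objective_eq by (intro derivative_eq_intros grad) (auto intro: grad)
  moreover have "(\<lambda>v. 1/2 * (G b \<bullet> v) + 1/2 * (G a \<bullet> v) + 1 / (2 * tau) * (v \<bullet> (b - a) + (b - a) \<bullet> v))
      = (\<lambda>v. w \<bullet> v)"
    by (simp add: fun_eq_iff w_def inner_add_right inner_commute algebra_simps)
  ultimately have "(trapezoid_objective F G tau a has_derivative (\<lambda>v. w \<bullet> v)) (at b)"
    by simp
  from differential_zero_maxmin[OF UNIV_I open_UNIV this] minimal
  have "w \<bullet> w = 0"
    by (metis UNIV_I)
  then have "tau *\<^sub>R w = 0"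
    by simp
  with tau show ?thesis
    unfolding w_def by (simp add: algebra_simps scaleR_add_right)
qed

lemma trapezoid_step_gradient_dissipation:
  fixes F :: "'h::real_inner \<Rightarrow> real" and G :: "'h \<Rightarrow> 'h"
  assumes grad: "\<And>x. (F has_derivative (\<lambda>h. G x \<bullet> h)) (at x)"
    and convex: "lambda_convex_on_space lam F"
    and tau: "0 < tau"
    and step: "a - b = (tau / 2) *\<^sub>R (G a + G b)"
  shows "lam * tau / 2 * (norm (G a + G b))\<^sup>2 \<le> (norm (G a))\<^sup>2 - (norm (G b))\<^sup>2"
proof -
  have "tau / 2 * (lam * tau / 2 * (norm (G a + G b))\<^sup>2) = lam * (norm (a - b))\<^sup>2"
    unfolding step using tau by (simp add: power_mult_distrib power_divide power2_eq_square)
  also have "\<dots> \<le> (G a - G b) \<bullet> (a - b)"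
    by (rule lambda_convex_gradient_strongly_monotone[OF grad convex])
  also have "\<dots> = tau / 2 * ((norm (G a))\<^sup>2 - (norm (G b))\<^sup>2)"
    unfolding step power2_norm_eq_inner
    by (simp add: inner_add_right inner_diff_left inner_commute algebra_simps)
  finally show ?thesis
    using tau by simp
qed

lemma trapezoid_step_gradient_norm_le:
  fixes F :: "'h::real_inner \<Rightarrow> real" and G :: "'h \<Rightarrow> 'h"
  assumes grad: "\<And>x. (F has_derivative (\<lambda>h. G x \<bullet> h)) (at x)"
    and convex: "lambda_convex_on_space lam F"
    and "0 \<le> lam" "0 < tau"
    and step: "a - b = (tau / 2) *\<^sub>R (G a + G b)"
  shows "norm (G b) \<le> norm (G a)"
proof -
  have "0 \<le> lam * tau / 2 * (norm (G a + G b))\<^sup>2"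
    using \<open>0 \<le> lam\<close> \<open>0 < tau\<close> by simp
  with trapezoid_step_gradient_dissipation[OF grad convex \<open>0 < tau\<close> step]
  have "(norm (G b))\<^sup>2 \<le> (norm (G a))\<^sup>2"
    by linarith
  then show ?thesis
    by (simp add: power2_le_iff_abs_le)
qed

lemma trapezoid_step_gradient_inner:
  fixes F :: "'h::real_inner \<Rightarrow> real" and G :: "'h \<Rightarrow> 'h"
  assumes grad: "\<And>x. (F has_derivative (\<lambda>h. G x \<bullet> h)) (at x)"
    and convex: "lambda_convex_on_space lam F"
    and lipschitz: "\<And>x y. norm (G x - G y) \<le> L * norm (x - y)"
    and "0 \<le> lam" "0 < tau" "0 \<le> L" "tau * L \<le> 2"
    and step: "a - b = (tau / 2) *\<^sub>R (G a + G b)"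
  shows "(1 - L * tau / 2) * (norm (G b))\<^sup>2 \<le> G a \<bullet> G b"
proof (rule inner_ge_of_norm_diff_le)
  show "norm (G b) \<le> norm (G a)"
    using trapezoid_step_gradient_norm_le[OF grad convex \<open>0 \<le> lam\<close> \<open>0 < tau\<close> step] .
  have "norm (G a - G b) \<le> L * norm (a - b)"
    by (rule lipschitz)
  also have "\<dots> = L * tau / 2 * norm (G a + G b)"
    unfolding step using \<open>0 < tau\<close> by simp
  finally show "norm (G a - G b) \<le> L * tau / 2 * norm (G a + G b)" .
qed (use \<open>0 < tau\<close> \<open>0 \<le> L\<close> \<open>tau * L \<le> 2\<close> in \<open>simp_all add: mult.commute\<close>)

lemma trapezoid_step_energy_inequality:
  fixes F :: "'h::real_inner \<Rightarrow> real" and G :: "'h \<Rightarrow> 'h"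
  assumes grad: "\<And>x. (F has_derivative (\<lambda>h. G x \<bullet> h)) (at x)"
    and convex: "lambda_convex_on_space lam F"
    and lipschitz: "\<And>x y. norm (G x - G y) \<le> L * norm (x - y)"
    and "0 \<le> lam" "0 < tau" "0 \<le> L" "tau * L \<le> 2"
    and step: "a - b = (tau / 2) *\<^sub>R (G a + G b)"
  shows "F b + lam / 2 * (norm (a - b))\<^sup>2 + tau * (1 - L * tau / 2) * (norm (G b))\<^sup>2 \<le> F a"
proof -
  have inner: "(1 - L * tau / 2) * (norm (G b))\<^sup>2 \<le> G a \<bullet> G b"
    by (rule trapezoid_step_gradient_inner[OF assms])
  have "0 \<le> tau / 2 * (L * tau / 2 * (norm (G b))\<^sup>2)"
    using \<open>0 < tau\<close> \<open>0 \<le> L\<close> by simp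
  then have "tau * (1 - L * tau / 2) * (norm (G b))\<^sup>2
      \<le> tau / 2 * ((1 - L * tau / 2) * (norm (G b))\<^sup>2 + (norm (G b))\<^sup>2)"
    by (simp add: algebra_simps)
  also have "\<dots> \<le> tau / 2 * (G a \<bullet> G b + (norm (G b))\<^sup>2)"
    using inner \<open>0 < tau\<close> by (intro mult_left_mono) auto
  also have "\<dots> = G b \<bullet> (a - b)"
    unfolding step power2_norm_eq_inner by (simp add: inner_add_right inner_commute algebra_simps)
  finally show ?thesis
    using lambda_convex_gradient_inequality[OF grad convex, of b a] by (simp add: norm_minus_commute)
qed

lemma trapezoid_step_gradient_decay:
  fixes F :: "'h::real_inner \<Rightarrow> real" and G :: "'h \<Rightarrow> 'h"
  assumes grad: "\<And>x. (F has_derivative (\<lambda>h. G x \<bullet> h)) (at x)"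
    and convex: "lambda_convex_on_space lam F"
    and lipschitz: "\<And>x y. norm (G x - G y) \<le> L * norm (x - y)"
    and "0 \<le> lam" "0 < tau" "0 \<le> L" "tau * L \<le> 2"
    and step: "a - b = (tau / 2) *\<^sub>R (G a + G b)"
  shows "(1 + lam * tau * (2 - L * tau)) * (norm (G b))\<^sup>2 \<le> (norm (G a))\<^sup>2"
proof -
  have dissipation: "lam * tau / 2 * (norm (G a + G b))\<^sup>2 \<le> (norm (G a))\<^sup>2 - (norm (G b))\<^sup>2"
    using trapezoid_step_gradient_dissipation[OF grad convex \<open>0 < tau\<close> step] .
  have inner: "(1 - L * tau / 2) * (norm (G b))\<^sup>2 \<le> G a \<bullet> G b"
    by (rule trapezoid_step_gradient_inner[OF assms])
  have "(norm (G b))\<^sup>2 \<le> (norm (G a))\<^sup>2"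
    using trapezoid_step_gradient_norm_le[OF grad convex \<open>0 \<le> lam\<close> \<open>0 < tau\<close> step]
    by (simp add: power_mono)
  moreover have "(1 - L * tau / 2) * (norm (G b))\<^sup>2 = (norm (G b))\<^sup>2 - L * tau / 2 * (norm (G b))\<^sup>2"
    by (simp add: left_diff_distrib)
  moreover have "0 \<le> L * tau / 2 * (norm (G b))\<^sup>2"
    using \<open>0 < tau\<close> \<open>0 \<le> L\<close> by simp
  moreover have "(norm (G a + G b))\<^sup>2 = (norm (G a))\<^sup>2 + 2 * (G a \<bullet> G b) + (norm (G b))\<^sup>2"
    unfolding power2_norm_eq_inner by (simp add: inner_add_left inner_add_right inner_commute)
  ultimately have sum_bound: "4 * (1 - L * tau / 2) * (norm (G b))\<^sup>2 \<le> (norm (G a + G b))\<^sup>2"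
    using inner by linarith
  have "lam * tau * (2 - L * tau) * (norm (G b))\<^sup>2
      = lam * tau / 2 * (4 * (1 - L * tau / 2) * (norm (G b))\<^sup>2)"
    by (simp add: algebra_simps)
  also have "\<dots> \<le> lam * tau / 2 * (norm (G a + G b))\<^sup>2"
    using sum_bound \<open>0 \<le> lam\<close> \<open>0 < tau\<close> by (intro mult_left_mono) auto
  finally have "lam * tau * (2 - L * tau) * (norm (G b))\<^sup>2 \<le> lam * tau / 2 * (norm (G a + G b))\<^sup>2" .
  with dissipation show ?thesis
    by (simp add: algebra_simps)
qed

lemma exp_lambda_tauL:
  assumes "0 < tau" "0 < 1 + lam * tau * (2 - L * tau)"
  shows "exp (2 * lambda_tauL lam tau L * tau) = 1 + lam * tau * (2 - L * tau)"
  using assms by (simp add: lambda_tauL_def)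

lemma lambda_tauL_nonneg:
  assumes "0 \<le> lam" "0 < tau" "tau * L \<le> 2"
  shows "0 \<le> lambda_tauL lam tau L"
  using assms by (simp add: lambda_tauL_def mult.commute)

theorem mainTheorem17:
  fixes F :: "'h::{real_inner, complete_space} \<Rightarrow> real"
    and G :: "'h \<Rightarrow> 'h"
    and X :: "nat \<Rightarrow> 'h"
    and lam L tau :: real
  assumes grad: "\<And>x. (F has_derivative (\<lambda>h. G x \<bullet> h)) (at x)"
    and convex: "lambda_convex_on_space lam F"
    and bdd: "bdd_below (range F)"
    and tau_pos: "tau > 0"
    and step_cond: "lam / 2 + 1 / tau > 0"
    and scheme: "\<And>n xi. trapezoid_objective F G tau (X n) (X (Suc n))
                          \<le> trapezoid_objective F G tau (X n) xi"
    and lam_nonneg: "lam \<ge> 0"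
    and L_nonneg: "L \<ge> 0"
    and lipschitz: "\<And>x y. norm (G x - G y) \<le> L * norm (x - y)"
    and tau_small: "tau * L \<le> 1"
  shows "\<forall>n. F (X (Suc n)) + lam / 2 * (norm (X n - X (Suc n)))\<^sup>2
               + tau * (1 - L * tau / 2) * (norm (G (X (Suc n))))\<^sup>2 \<le> F (X n)
          \<and> (norm (G (X n)))\<^sup>2 \<ge> exp (2 * lambda_tauL lam tau L * tau) * (norm (G (X (Suc n))))\<^sup>2
          \<and> lambda_tauL lam tau L \<ge> 0"
proof (intro allI conjI)
  \<comment> \<open>bdd and step_cond only make the scheme well posed; minimality of each step is assumed.\<close>
  fix n
  have step: "X n - X (Suc n) = (tau / 2) *\<^sub>R (G (X n) + G (X (Suc n)))"
    using trapezoid_minimizer_euler_lagrange[OF grad tau_pos scheme] .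
  have tau_L: "tau * L \<le> 2"
    using tau_small by simp
  note step_facts = grad convex lipschitz lam_nonneg tau_pos L_nonneg tau_L step
  show "F (X (Suc n)) + lam / 2 * (norm (X n - X (Suc n)))\<^sup>2
      + tau * (1 - L * tau / 2) * (norm (G (X (Suc n))))\<^sup>2 \<le> F (X n)"
    by (rule trapezoid_step_energy_inequality[OF step_facts])
  have "0 \<le> lam * tau * (2 - L * tau)"
    using lam_nonneg tau_pos tau_L by (simp add: mult.commute)
  then show "exp (2 * lambda_tauL lam tau L * tau) * (norm (G (X (Suc n))))\<^sup>2 \<le> (norm (G (X n)))\<^sup>2"
    using exp_lambda_tauL[OF tau_pos] trapezoid_step_gradient_decay[OF step_facts] by simp
  show "0 \<le> lambda_tauL lam tau L"
    using lambda_tauL_nonneg[OF lam_nonneg tau_pos tau_L] .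
qed

end
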